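(* Let $n\ge 1$, let $L\subseteq\mathbb Z^n$ be a lattice, and let $(\cdot,\cdot)$ be an inner product on $\mathbb R^n$ for which the canonical basis $\vec e_1,\dots,\vec e_n$ is orthogonal (not necessarily orthonormal). Assume that $(L,(\cdot,\cdot))$ is a zonotopal lattice. Then a vector $\vec v\in L$ is an elementary vector of $L$ if and only if it is a strict Voronoi vector of $L$ (with respect to $(\cdot,\cdot)$).
   Context: A lattice $L\subseteq\mathbb Z^n$ is the $\mathbb Z$-span of finitely many linearly independent vectors of $\mathbb Z^n$. The support of $\vec v\in\mathbb R^n$ is $\underline{\vec v}=\{i: v_i\neq 0\}$. A vector $\vec u\in L$ is elementary if $\vec u\in\{-1,0,+1\}^n\setminus\{\vec 0\}$ and $\vec u$ has minimal support among all vectors of $L\setminus\{\vec 0\}$ (i.e. no nonzero vector of $L$ has support strictly contained in $\underline{\vec u}$). The pair $(L,(\cdot,\cdot))$ is a zonotopal lattice if for every $\vec v\in L\setminus\{\vec 0\}$ there is an elementary vector $\vec u\in L$ with $\underline{\vec u}\subseteq\underline{\vec v}$. A vector $\vec v\in L\setminus\{\vec 0\}$ is a strict Voronoi vector if $\pm\vec v$ are the only vectors of minimal norm $(\vec w,\vec w)$ among all $\vec w$ in the coset $\vec v+2L$. *)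

theory Defs
  imports "HOL-Analysis.Analysis"
begin

text \<open>Integer vectors in Z^n are modelled as int^'n; the dimension n = CARD('n) \<ge> 1.\<close>

definition rvec :: "int^'n \<Rightarrow> real^'n" where
  "rvec v = (\<chi> i. real_of_int (v $ i))"

definition is_lattice :: "(int^'n) set \<Rightarrow> bool" where
  "is_lattice L \<longleftrightarrow> (\<exists>S. finite S \<and> inj_on rvec S \<and> independent (rvec ` S) \<and>
      L = {(\<Sum>b\<in>S. c b *s b) | c :: int^'n \<Rightarrow> int. True})"

definition is_inner_product :: "(real^'n \<Rightarrow> real^'n \<Rightarrow> real) \<Rightarrow> bool" where
  "is_inner_product B \<longleftrightarrow> bilinear B \<and> (\<forall>x y. B x y = B y x) \<and> (\<forall>x. x \<noteq> 0 \<longrightarrow> B x x > 0)"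

definition canonical_basis_orthogonal :: "(real^'n \<Rightarrow> real^'n \<Rightarrow> real) \<Rightarrow> bool" where
  "canonical_basis_orthogonal B \<longleftrightarrow> (\<forall>i j. i \<noteq> j \<longrightarrow> B (axis i 1) (axis j 1) = 0)"

definition supp :: "int^'n \<Rightarrow> 'n set" where
  "supp v = {i. v $ i \<noteq> 0}"

definition elementary :: "(int^'n) set \<Rightarrow> int^'n \<Rightarrow> bool" where
  "elementary L u \<longleftrightarrow> u \<in> L \<and> u \<noteq> 0 \<and> (\<forall>i. u $ i \<in> {-1, 0, 1}) \<and>
      \<not> (\<exists>w\<in>L. w \<noteq> 0 \<and> supp w \<subset> supp u)"

definition zonotopal :: "(int^'n) set \<Rightarrow> bool" where
  "zonotopal L \<longleftrightarrow> (\<forall>v\<in>L. v \<noteq> 0 \<longrightarrow> (\<exists>u. elementary L u \<and> supp u \<subseteq> supp v))"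

definition strict_voronoi :: "(int^'n) set \<Rightarrow> (real^'n \<Rightarrow> real^'n \<Rightarrow> real) \<Rightarrow> int^'n \<Rightarrow> bool" where
  "strict_voronoi L B v \<longleftrightarrow> v \<in> L \<and> v \<noteq> 0 \<and>
      (\<forall>x\<in>L. let w = v + 2 *s x in
         w \<noteq> v \<and> w \<noteq> - v \<longrightarrow> B (rvec w) (rvec w) > B (rvec v) (rvec v))"

end

theory Submission imports Defs begin

text \<open>Because the canonical basis is orthogonal, the norm of an integer vector is a diagonal
quadratic form with positive weights, so it is monotone in the absolute values of the coordinates.
If v is elementary, its coordinates lie in {-1, 0, 1}, and every w = v + 2x has odd coordinates
where v is nonzero, hence is coordinatewise at least as long as v; a tie forces the support of x
to lie in that of v, and minimality of the support of v then forces x = -v.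
Conversely, zonotopality yields, by elimination on supports, an elementary vector u that
conforms to v; then v - 2u is coordinatewise no longer than v, so strictness forces v - 2u = -v,
i.e. v = u.\<close>

lemma bilinear_orthogonal_basis_diag:
  assumes bl: "bilinear B" and ob: "canonical_basis_orthogonal B"
  shows "B x x = (\<Sum>i\<in>UNIV. (x$i)^2 * B (axis i 1) (axis i 1))"
proof -
  have "B x x = B (\<Sum>i\<in>UNIV. (x$i) *\<^sub>R axis i 1) (\<Sum>j\<in>UNIV. (x$j) *\<^sub>R axis j 1)"
    using basis_expansion[of x] by (simp add: scalar_mult_eq_scaleR)
  also have "\<dots> = (\<Sum>i\<in>UNIV. \<Sum>j\<in>UNIV. B ((x$i) *\<^sub>R axis i 1) ((x$j) *\<^sub>R axis j 1))"
    by (simp add: bilinear_sum[OF bl] sum.cartesian_product)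
  also have "\<dots> = (\<Sum>i\<in>UNIV. \<Sum>j\<in>UNIV. if j = i then (x$i)^2 * B (axis i 1) (axis i 1) else 0)"
    using ob unfolding canonical_basis_orthogonal_def
    by (intro sum.cong refl) (auto simp: bilinear_lmul[OF bl] bilinear_rmul[OF bl] power2_eq_square)
  finally show ?thesis by simp
qed

lemma inner_product_axis_pos:
  assumes "is_inner_product B"
  shows "B (axis i 1) (axis i 1) > 0"
  using assms axis_eq_0_iff[of i "1::real"] unfolding is_inner_product_def by auto

lemma inner_product_rvec_diag:
  assumes "is_inner_product B" and "canonical_basis_orthogonal B"
  shows "B (rvec w) (rvec w) = (\<Sum>i\<in>UNIV. real_of_int \<bar>w$i\<bar>^2 * B (axis i 1) (axis i 1))"
  using assms bilinear_orthogonal_basis_diag[of B "rvec w"]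
  by (simp add: is_inner_product_def rvec_def)

lemma inner_product_rvec_mono:
  assumes "is_inner_product B" and "canonical_basis_orthogonal B"
    and "\<And>i. \<bar>v$i\<bar> \<le> \<bar>w$i\<bar>"
  shows "B (rvec v) (rvec v) \<le> B (rvec w) (rvec w)"
  unfolding inner_product_rvec_diag[OF assms(1,2)]
  using assms(3) inner_product_axis_pos[OF assms(1)]
  by (intro sum_mono mult_right_mono power_mono) (auto simp flip: of_int_abs intro: less_imp_le)

lemma inner_product_rvec_strict_mono:
  assumes "is_inner_product B" and "canonical_basis_orthogonal B"
    and "\<And>i. \<bar>v$i\<bar> \<le> \<bar>w$i\<bar>" and "\<bar>v$k\<bar> < \<bar>w$k\<bar>"
  shows "B (rvec v) (rvec v) < B (rvec w) (rvec w)"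
  unfolding inner_product_rvec_diag[OF assms(1,2)]
proof (rule sum_strict_mono_ex1)
  show "\<forall>i\<in>UNIV. real_of_int \<bar>v$i\<bar>^2 * B (axis i 1) (axis i 1)
                \<le> real_of_int \<bar>w$i\<bar>^2 * B (axis i 1) (axis i 1)"
    using assms(3) inner_product_axis_pos[OF assms(1)]
    by (intro ballI mult_right_mono power_mono) (auto simp flip: of_int_abs intro: less_imp_le)
  show "\<exists>i\<in>UNIV. real_of_int \<bar>v$i\<bar>^2 * B (axis i 1) (axis i 1)
                < real_of_int \<bar>w$i\<bar>^2 * B (axis i 1) (axis i 1)"
    using assms(4) inner_product_axis_pos[OF assms(1), of k]
    by (intro bexI[of _ k] mult_strict_right_mono power_strict_mono) auto
qed simp

lemma lattice_add_closed:
  assumes "is_lattice L" "a \<in> L" "b \<in> L"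
  shows "a + b \<in> L"
proof -
  obtain S where L: "L = {(\<Sum>x\<in>S. c x *s x) | c. True}"
    using assms(1) unfolding is_lattice_def by blast
  obtain c d where "a = (\<Sum>x\<in>S. c x *s x)" "b = (\<Sum>x\<in>S. d x *s x)"
    using assms(2,3) L by blast
  then have "a + b = (\<Sum>x\<in>S. (c x + d x) *s x)"
    by (simp add: sum.distrib vector_sadd_rdistrib)
  then show ?thesis using L by (auto intro!: exI[of _ "\<lambda>x. c x + d x"])
qed

lemma lattice_smult_closed:
  assumes "is_lattice L" "a \<in> L"
  shows "k *s a \<in> L"
proof -
  obtain S where L: "L = {(\<Sum>x\<in>S. c x *s x) | c. True}"
    using assms(1) unfolding is_lattice_def by blast
  obtain c where "a = (\<Sum>x\<in>S. c x *s x)"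
    using assms(2) L by blast
  then have "k *s a = (\<Sum>x\<in>S. (k * c x) *s x)"
    by (simp add: vec_eq_iff sum_distrib_left mult.assoc)
  then show ?thesis using L by (auto intro!: exI[of _ "\<lambda>x. k * c x"])
qed

definition conforms :: "int^'n \<Rightarrow> int^'n \<Rightarrow> bool" where
  "conforms u v \<longleftrightarrow> (\<forall>i. (0 < u$i \<longrightarrow> 0 < v$i) \<and> (u$i < 0 \<longrightarrow> v$i < 0))"

lemma conforms_trans: "conforms u v \<Longrightarrow> conforms v w \<Longrightarrow> conforms u w"
  unfolding conforms_def by blast

lemma conforms_supp_subset: "conforms u v \<Longrightarrow> supp u \<subseteq> supp v"
  unfolding conforms_def supp_def by (auto simp: neq_iff)

lemma elimination_step_sign:
  fixes a c t :: int
  assumes "c \<in> {-1, 0, 1}" and "c \<noteq> 0 \<Longrightarrow> a \<noteq> 0" and "0 < t"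
    and "c \<noteq> 0 \<Longrightarrow> (0 < c \<longleftrightarrow> 0 < a) \<Longrightarrow> t \<le> \<bar>a\<bar>"
  shows "(0 < a - t * c \<longrightarrow> 0 < a) \<and> (a - t * c < 0 \<longrightarrow> a < 0)"
  using assms by (cases "0 < a") auto

text \<open>Circuit elimination: subtracting the right multiple of u cancels one coordinate of v
  without ever changing a sign.\<close>

lemma elementary_elimination:
  assumes lat: "is_lattice L" and "v \<in> L" and u: "elementary L u" and uv: "supp u \<subseteq> supp v"
    and "\<not> conforms u v" and "\<not> conforms (- u) v"
  obtains w where "w \<in> L" "w \<noteq> 0" "conforms w v" "supp w \<subset> supp v"
proof -
  have u_entries: "u$i \<in> {-1, 0, 1}" for i
    using u unfolding elementary_def by blast
  have u_v: "u$i \<noteq> 0 \<Longrightarrow> v$i \<noteq> 0" for i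
    using uv unfolding supp_def by blast
  define P where "P = {i. u$i \<noteq> 0 \<and> (0 < u$i \<longleftrightarrow> 0 < v$i)}"
  obtain j where "\<not> ((0 < u$j \<longrightarrow> 0 < v$j) \<and> (u$j < 0 \<longrightarrow> v$j < 0))"
    using \<open>\<not> conforms u v\<close> unfolding conforms_def by blast
  then have j: "u$j \<noteq> 0" "j \<notin> P"
    using u_v[of j] unfolding P_def by auto
  obtain k0 where "\<not> ((0 < - u$k0 \<longrightarrow> 0 < v$k0) \<and> (- u$k0 < 0 \<longrightarrow> v$k0 < 0))"
    using \<open>\<not> conforms (- u) v\<close> unfolding conforms_def by auto
  then have "k0 \<in> P"
    using u_v[of k0] unfolding P_def by auto
  then have "P \<noteq> {}"
    by blast
  define t where "t = Min ((\<lambda>i. \<bar>v$i\<bar>) ` P)"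
  have "t \<in> (\<lambda>i. \<bar>v$i\<bar>) ` P"
    unfolding t_def using \<open>P \<noteq> {}\<close> by (intro Min_in) auto
  then obtain k where k: "k \<in> P" "t = \<bar>v$k\<bar>"
    by blast
  have t_le: "i \<in> P \<Longrightarrow> t \<le> \<bar>v$i\<bar>" for i
    unfolding t_def by simp
  have "0 < t"
    using k u_v unfolding P_def by auto
  define w where "w = v + (- t) *s u"
  have w: "w$i = v$i - t * u$i" for i
    unfolding w_def by simp
  show thesis
  proof
    show "w \<in> L"
      unfolding w_def using lat \<open>v \<in> L\<close> u
      by (simp add: elementary_def lattice_add_closed lattice_smult_closed)
    show "conforms w v"
      unfolding conforms_def w
      using elimination_step_sign[OF u_entries u_v \<open>0 < t\<close>] t_le unfolding P_def by blast
    have "w$j \<noteq> 0"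
      using j u_entries[of j] w[of j] \<open>0 < t\<close> unfolding P_def by auto
    then show "w \<noteq> 0"
      by auto
    have "k \<in> supp v - supp w"
      using k u_entries[of k] w[of k] u_v[of k] unfolding P_def supp_def by auto
    then show "supp w \<subset> supp v"
      using conforms_supp_subset[OF \<open>conforms w v\<close>] by blast
  qed
qed

lemma zonotopal_conforming_elementary:
  assumes lat: "is_lattice L" and zon: "zonotopal L" and "v \<in> L" and "v \<noteq> 0"
  obtains u where "elementary L u" "conforms u v"
  using assms(3,4)
proof (induction "card (supp v)" arbitrary: v thesis rule: less_induct)
  case less
  obtain u where u: "elementary L u" "supp u \<subseteq> supp v"
    using zon less.prems unfolding zonotopal_def by blast
  have "elementary L (- u)"
    using u(1) lattice_smult_closed[OF lat, of u "-1"]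
    by (auto simp: elementary_def supp_def vector_sneg_minus1)
  consider "conforms u v" | "conforms (- u) v" | "\<not> conforms u v" "\<not> conforms (- u) v"
    by blast
  then show thesis
  proof cases
    case 3
    then obtain w where w: "w \<in> L" "w \<noteq> 0" "conforms w v" "supp w \<subset> supp v"
      using elementary_elimination[OF lat \<open>v \<in> L\<close> u] by blast
    have "card (supp w) < card (supp v)"
      using w(4) by (simp add: psubset_card_mono)
    then show thesis
      using less.hyps w(1,2) less.prems(1) conforms_trans[OF _ w(3)] by blast
  qed (use u(1) \<open>elementary L (- u)\<close> less.prems(1) in blast)+
qed

lemma abs_le_abs_add_even:
  fixes a x :: int
  assumes "a \<in> {-1, 0, 1}"
  shows "\<bar>a\<bar> \<le> \<bar>a + 2 * x\<bar>"
  using assms by (auto; presburger)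

lemma abs_eq_abs_add_even:
  fixes a x :: int
  assumes "a \<in> {-1, 0, 1}" and "\<bar>a + 2 * x\<bar> = \<bar>a\<bar>"
  shows "x = 0 \<or> x = - a"
  using assms by auto

lemma elementary_imp_strict_voronoi:
  assumes ip: "is_inner_product B" and ob: "canonical_basis_orthogonal B"
    and v: "elementary L v"
  shows "strict_voronoi L B v"
  unfolding strict_voronoi_def Let_def
proof (intro conjI ballI impI)
  fix x assume "x \<in> L" and "v + 2 *s x \<noteq> v \<and> v + 2 *s x \<noteq> - v"
  then have ne: "v + 2 *s x \<noteq> v" "v + 2 *s x \<noteq> - v"
    by blast+
  define w where "w = v + 2 *s x"
  have v_entries: "v$i \<in> {-1, 0, 1}" for i
    using v unfolding elementary_def by blast
  have le: "\<bar>v$i\<bar> \<le> \<bar>w$i\<bar>" for i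
    unfolding w_def using abs_le_abs_add_even[OF v_entries] by simp
  have "B (rvec v) (rvec v) < B (rvec w) (rvec w)"
  proof (rule ccontr)
    assume "\<not> ?thesis"
    then have "\<bar>w$i\<bar> = \<bar>v$i\<bar>" for i
      using inner_product_rvec_strict_mono[OF ip ob le, where k=i] le[of i] by force
    then have x: "x$i = 0 \<or> x$i = - v$i" for i
      using abs_eq_abs_add_even[OF v_entries] unfolding w_def by simp
    then have "supp x \<subseteq> supp v"
      unfolding supp_def by force
    moreover have "x \<noteq> 0"
      using ne(1) by auto
    ultimately have "supp x = supp v"
      using v \<open>x \<in> L\<close> unfolding elementary_def by blast
    then have "x = - v"
      using x unfolding supp_def vec_eq_iff by force
    then show False
      using ne(2) by (simp add: vec_eq_iff)
  qed
  then show "B (rvec v) (rvec v) < B (rvec (v + 2 *s x)) (rvec (v + 2 *s x))"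
    by (simp add: w_def)
qed (use v in \<open>auto simp: elementary_def\<close>)

lemma abs_sub_twice_conforming:
  fixes a c :: int
  assumes "c \<in> {-1, 0, 1}" and "0 < c \<Longrightarrow> 0 < a" and "c < 0 \<Longrightarrow> a < 0"
  shows "\<bar>a + 2 * - c\<bar> \<le> \<bar>a\<bar>"
  using assms by auto

lemma strict_voronoi_conforming_elementary_eq:
  assumes ip: "is_inner_product B" and ob: "canonical_basis_orthogonal B"
    and lat: "is_lattice L" and v: "strict_voronoi L B v"
    and u: "elementary L u" and "conforms u v"
  shows "u = v"
proof -
  have "- u \<in> L"
    using u lattice_smult_closed[OF lat, of u "-1"] by (simp add: elementary_def vector_sneg_minus1)
  have "\<bar>(v + 2 *s - u)$i\<bar> \<le> \<bar>v$i\<bar>" for i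
    using u \<open>conforms u v\<close> abs_sub_twice_conforming[of "u$i" "v$i"]
    unfolding elementary_def conforms_def by simp
  then have "\<not> B (rvec v) (rvec v) < B (rvec (v + 2 *s - u)) (rvec (v + 2 *s - u))"
    using inner_product_rvec_mono[OF ip ob] by (simp add: not_less)
  then have "v + 2 *s - u = v \<or> v + 2 *s - u = - v"
    using v \<open>- u \<in> L\<close> unfolding strict_voronoi_def Let_def by blast
  moreover have "u \<noteq> 0"
    using u unfolding elementary_def by blast
  ultimately show "u = v"
    by (auto simp: vec_eq_iff)
qed

theorem lemma2:
  fixes L :: "(int^'n) set" and B :: "real^'n \<Rightarrow> real^'n \<Rightarrow> real" and v :: "int^'n"
  assumes "is_lattice L"
    and "is_inner_product B"
    and "canonical_basis_orthogonal B"
    and "zonotopal L"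
    and "v \<in> L"
  shows "elementary L v \<longleftrightarrow> strict_voronoi L B v"
proof
  show "elementary L v \<Longrightarrow> strict_voronoi L B v"
    using assms(2,3) by (rule elementary_imp_strict_voronoi)
next
  assume sv: "strict_voronoi L B v"
  then have "v \<noteq> 0"
    unfolding strict_voronoi_def by blast
  then obtain u where "elementary L u" "conforms u v"
    using zonotopal_conforming_elementary[OF assms(1,4,5)] by blast
  moreover from this have "u = v"
    using strict_voronoi_conforming_elementary_eq[OF assms(2,3,1) sv] by blast
  ultimately show "elementary L v"
    by simp
qed

end
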